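(* Let $K\subseteq \mathbb{R}^k$ be compact and let $f:\mathbb{R}^k\to\mathbb{R}$ be $f(x)=d(x,K)$. Let $\epsilon\geq 0$ and $\delta>0$ be such that $2\delta+\epsilon<1$. Let $x\in\mathbb{R}^k$ and $r$ with $0<r<d(x,K)$, and suppose there are $z_1,z_2\in K$ with $d(x,z_1)\leq d(x,K)+\epsilon r$ and $d(x,z_2)\leq d(x,K)+\epsilon r$. Suppose that $f$ is $\delta$-coarsely differentiable on $B(x,r)$. Let $\theta$ be the angle between $[x,z_1]$ and $[x,z_2]$. Then $$|\theta|\leq \cos^{-1}\left(2\left(\frac{1-(2\delta+\epsilon)}{1+2\delta}\right)^2-1\right).$$
   Context: $d(p,q)=|p-q|$ is the Euclidean distance, $d(p,K)=\inf\{d(p,x):x\in K\}$, and $B(x,r)$ is the closed Euclidean ball of radius $r$ centered at $x$. A function $f:\mathbb{R}^k\to\mathbb{R}$ is $\delta$-coarsely differentiable on $B(x,r)$ if there is an affine function $\lambda:\mathbb{R}^k\to\mathbb{R}$ such that $|f(p)-\lambda(p)|\leq \delta r$ for all $p\in B(x,r)$. *)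

theory Defs
  imports "HOL-Analysis.Analysis"
begin

definition vec_angle :: "'a::euclidean_space \<Rightarrow> 'a \<Rightarrow> real" where
  "vec_angle u v = arccos ((u \<bullet> v) / (norm u * norm v))"

definition coarsely_differentiable_on ::
  "real \<Rightarrow> ('a::euclidean_space \<Rightarrow> real) \<Rightarrow> 'a \<Rightarrow> real \<Rightarrow> bool" where
  "coarsely_differentiable_on \<delta> f x r \<longleftrightarrow>
     (\<exists>a b. \<forall>p \<in> cball x r. \<bar>f p - (a \<bullet> p + b)\<bar> \<le> \<delta> * r)"

end

theory Submission
  imports Defs
begin

text \<open>Let \<open>a \<bullet> p + b\<close> approximate \<open>f = infdist \<cdot> K\<close> within \<open>\<delta> r\<close> on \<open>B(x, r)\<close>.
  Comparing \<open>f\<close> and the affine function at \<open>x\<close> and at a point at distance \<open>r\<close> from \<open>x\<close>,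
  the slope of the affine function in any unit direction differs from the increment
  of \<open>f\<close> over distance \<open>r\<close> by at most \<open>2 \<delta> r\<close>. Since \<open>f\<close> is 1-Lipschitz this gives
  \<open>\<parallel>a\<parallel> \<le> 1 + 2\<delta>\<close>; since \<open>f\<close> drops by almost \<open>r\<close> when moving towards a nearly
  nearest point \<open>z\<^sub>i\<close>, it gives \<open>a \<bullet> u\<^sub>i \<le> -(1 - 2\<delta> - \<epsilon>)\<close> for the unit vectors
  \<open>u\<^sub>i\<close> pointing to \<open>z\<^sub>i\<close>. Then \<open>\<parallel>u\<^sub>1 + u\<^sub>2\<parallel>\<close> is bounded below by
  \<open>2 (1 - 2\<delta> - \<epsilon>) / (1 + 2\<delta>)\<close>, and \<open>\<parallel>u\<^sub>1 + u\<^sub>2\<parallel>\<^sup>2 = 2 + 2 cos \<theta>\<close>.\<close>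

lemma affine_approx_slope_le:
  fixes f :: "'a::real_inner \<Rightarrow> real"
  assumes approx: "\<forall>p \<in> cball x r. \<bar>f p - (a \<bullet> p + b)\<bar> \<le> \<delta> * r"
    and "norm u \<le> 1" and "0 \<le> r"
  shows "r * (a \<bullet> u) \<le> f (x + r *\<^sub>R u) - f x + 2 * \<delta> * r"
proof -
  have "x + r *\<^sub>R u \<in> cball x r"
    using assms(2,3) mult_left_le[of "norm u" r] by (simp add: dist_norm)
  then have "\<bar>f (x + r *\<^sub>R u) - (a \<bullet> x + r * (a \<bullet> u) + b)\<bar> \<le> \<delta> * r"
    using approx by (fastforce simp: inner_add_right)
  moreover have "\<bar>f x - (a \<bullet> x + b)\<bar> \<le> \<delta> * r"
    using approx assms(3) by simp
  ultimately show ?thesis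
    by (simp add: abs_le_iff)
qed

lemma affine_approx_norm_le:
  fixes f :: "'a::real_inner \<Rightarrow> real"
  assumes approx: "\<forall>p \<in> cball x r. \<bar>f p - (a \<bullet> p + b)\<bar> \<le> \<delta> * r"
    and lipschitz: "\<And>p. p \<in> cball x r \<Longrightarrow> f p \<le> f x + dist p x"
    and "0 < r"
  shows "norm a \<le> 1 + 2 * \<delta>"
proof -
  let ?p = "x + r *\<^sub>R sgn a"
  have "norm (sgn a) \<le> 1"
    by (simp add: norm_sgn)
  then have "r * (a \<bullet> sgn a) \<le> f ?p - f x + 2 * \<delta> * r"
    using affine_approx_slope_le[OF approx] assms(3) by simp
  moreover have "a \<bullet> sgn a = norm a"
    by (cases "a = 0") (simp_all add: sgn_div_norm dot_square_norm power2_eq_square)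
  moreover have "f ?p \<le> f x + r"
  proof -
    have "dist x ?p \<le> r"
      using assms(3) \<open>norm (sgn a) \<le> 1\<close> mult_left_le[of "norm (sgn a)" r]
      by (simp add: dist_norm)
    then show ?thesis
      using lipschitz[of ?p] by (simp add: dist_commute)
  qed
  ultimately have "r * norm a \<le> r * (1 + 2 * \<delta>)"
    by (simp add: algebra_simps)
  then show ?thesis
    using assms(3) by simp
qed

lemma infdist_step_towards_le:
  fixes x z :: "'a::real_normed_vector"
  assumes "z \<in> K" and "t \<le> dist x z"
  shows "infdist (x + t *\<^sub>R sgn (z - x)) K \<le> dist x z - t"
proof (cases "z = x")
  case True
  then show ?thesis
    using assms by simp
next
  case False
  have "z - (x + t *\<^sub>R sgn (z - x)) = (norm (z - x) - t) *\<^sub>R sgn (z - x)"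
    using False by (simp add: sgn_div_norm algebra_simps)
  then have "dist (x + t *\<^sub>R sgn (z - x)) z = dist x z - t"
    using False assms(2) by (simp add: dist_norm norm_minus_commute norm_sgn)
  then show ?thesis
    using infdist_le[OF assms(1)] by metis
qed

lemma affine_approx_infdist_slope_towards:
  fixes x z :: "'a::real_inner"
  assumes approx: "\<forall>p \<in> cball x r. \<bar>infdist p K - (a \<bullet> p + b)\<bar> \<le> \<delta> * r"
    and "0 < r" and "r \<le> infdist x K"
    and "z \<in> K" and "dist x z \<le> infdist x K + \<epsilon> * r"
  shows "a \<bullet> sgn (z - x) \<le> -(1 - (2 * \<delta> + \<epsilon>))"
proof -
  have "r \<le> dist x z"
    using assms(3) infdist_le[OF assms(4), of x] by linarith
  then have "infdist (x + r *\<^sub>R sgn (z - x)) K \<le> infdist x K + \<epsilon> * r - r"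
    using infdist_step_towards_le[OF assms(4)] assms(5) by force
  moreover have "r * (a \<bullet> sgn (z - x))
      \<le> infdist (x + r *\<^sub>R sgn (z - x)) K - infdist x K + 2 * \<delta> * r"
    using affine_approx_slope_le[OF approx] assms(2) by (simp add: norm_sgn)
  ultimately have "r * (a \<bullet> sgn (z - x)) \<le> r * (-(1 - (2 * \<delta> + \<epsilon>)))"
    by (simp add: algebra_simps)
  then show ?thesis
    using assms(2) by simp
qed

lemma inner_unit_vectors_ge_of_common_descent:
  fixes a u v :: "'a::real_inner"
  assumes "norm u = 1" and "norm v = 1"
    and "a \<bullet> u \<le> - c" and "a \<bullet> v \<le> - c"
    and "norm a \<le> M" and "0 \<le> c" and "0 < M"
  shows "2 * (c / M)\<^sup>2 - 1 \<le> u \<bullet> v"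
proof -
  have "2 * c \<le> - (a \<bullet> (u + v))"
    using assms(3,4) by (simp add: inner_add_right)
  also have "\<dots> \<le> norm a * norm (u + v)"
    using Cauchy_Schwarz_ineq2[of a "u + v"] by linarith
  also have "\<dots> \<le> M * norm (u + v)"
    using assms(5) by (simp add: mult_right_mono)
  finally have "2 * (c / M) \<le> norm (u + v)"
    using assms(7) by (simp add: field_simps)
  then have "(2 * (c / M))\<^sup>2 \<le> (norm (u + v))\<^sup>2"
    using assms(6,7) by (intro power_mono) auto
  also have "(norm (u + v))\<^sup>2 = 2 + 2 * (u \<bullet> v)"
    using assms(1,2) dot_square_norm[of u] dot_square_norm[of v]
    by (simp add: power2_norm_eq_inner inner_add inner_commute)
  finally show ?thesis
    unfolding power_mult_distrib by simp
qed

lemma vec_angle_eq_arccos_inner_sgn: "vec_angle u v = arccos (sgn u \<bullet> sgn v)"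
  by (simp add: vec_angle_def sgn_div_norm divide_inverse mult_ac)

lemma vec_angle_le_arccos:
  assumes "c \<le> sgn u \<bullet> sgn v" and "- 1 \<le> c"
  shows "\<bar>vec_angle u v\<bar> \<le> arccos c"
proof -
  have "norm (sgn u) * norm (sgn v) \<le> 1"
    by (simp add: norm_sgn)
  then have "\<bar>sgn u \<bullet> sgn v\<bar> \<le> 1"
    using Cauchy_Schwarz_ineq2[of "sgn u" "sgn v"] by linarith
  then show ?thesis
    using assms unfolding vec_angle_eq_arccos_inner_sgn
    by (simp add: arccos_lbound arccos_le_arccos)
qed

theorem theorem3p1:
  fixes K :: "'a::euclidean_space set" and f :: "'a \<Rightarrow> real"
    and \<epsilon> \<delta> r :: real and x z1 z2 :: 'a
  assumes "compact K"
    and "f = (\<lambda>y. infdist y K)"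
    and "\<epsilon> \<ge> 0" and "\<delta> > 0" and "2 * \<delta> + \<epsilon> < 1"
    and "0 < r" and "r < infdist x K"
    and "z1 \<in> K" and "z2 \<in> K"
    and "dist x z1 \<le> infdist x K + \<epsilon> * r"
    and "dist x z2 \<le> infdist x K + \<epsilon> * r"
    and "coarsely_differentiable_on \<delta> f x r"
  shows "\<bar>vec_angle (z1 - x) (z2 - x)\<bar>
           \<le> arccos (2 * ((1 - (2 * \<delta> + \<epsilon>)) / (1 + 2 * \<delta>))\<^sup>2 - 1)"
proof -
  obtain a b where approx: "\<forall>p \<in> cball x r. \<bar>infdist p K - (a \<bullet> p + b)\<bar> \<le> \<delta> * r"
    using assms(2,12) unfolding coarsely_differentiable_on_def by auto
  have "norm a \<le> 1 + 2 * \<delta>"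
    using affine_approx_norm_le[OF approx _ assms(6)] infdist_triangle by blast
  moreover have "a \<bullet> sgn (z1 - x) \<le> -(1 - (2 * \<delta> + \<epsilon>))"
    and "a \<bullet> sgn (z2 - x) \<le> -(1 - (2 * \<delta> + \<epsilon>))"
    using affine_approx_infdist_slope_towards[OF approx assms(6)] assms(7-11) by auto
  moreover have "z1 \<noteq> x" and "z2 \<noteq> x"
    using assms(6,7) infdist_le[OF assms(8), of x] infdist_le[OF assms(9), of x] by auto
  ultimately have "2 * ((1 - (2 * \<delta> + \<epsilon>)) / (1 + 2 * \<delta>))\<^sup>2 - 1 \<le> sgn (z1 - x) \<bullet> sgn (z2 - x)"
    using assms(4,5) by (intro inner_unit_vectors_ge_of_common_descent) (auto simp: norm_sgn)
  then show ?thesis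
    by (rule vec_angle_le_arccos) simp
qed

end
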